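(* Let $\mathbf m=(m_1,\dots,m_r)$ be a type and let $e=n-m_1-\dots-m_r$ be the number of empty sites. Then \[ \frac{Z_{\mathbf m}}{Z_{\mathbf m^-}}=h_e(\underbrace{t_1,\dots,t_1}_{m_1},\underbrace{t_2,\dots,t_2}_{m_2},\dots,\underbrace{t_{r-1},\dots,t_{r-1}}_{m_{r-1}},\underbrace{t_r,\dots,t_r}_{m_r+1}), \] where $h_e$ is the complete homogeneous symmetric polynomial of degree $e$.
   Context: Fix a positive integer $n$; sites $1,\dots,n$ are arranged cyclically. A word is $w=w_1\cdots w_n\in\{1,2,\dots,\infty\}^n$; finite entries are particles, entries $\infty$ are empty sites. A type is a tuple $\mathbf m=(m_1,\dots,m_r)$ of positive integers with $m_1+\dots+m_r\le n$; a word has type $\mathbf m$ if it has exactly $m_i$ entries $i$ and all other entries $\infty$. Put $\mathbf m^-=(m_1,\dots,m_{r-1})$. Queues: a queue of capacity $c$ is a choice of $c$ of the $n$ sites, called terminal. Given an input word $x$ whose finite entries lie in $\{1,\dots,i-1\}$, replace each $\infty$ by $i$; then the $n$ particles enter the queue one at a time in an order in which smaller particles come before larger ones (ties arbitrary). A particle at site $j$ first visits site $j$, then $j+1,j+2,\dots$ cyclically, stopping at (and occupying) the first terminal site not yet occupied; if all terminal sites are occupied it visits every site and is discarded. The output $q(x)$ has at each terminal site the size of the particle occupying it and $\infty$ at each non-terminal site. For each size $s$ let $\alpha_s$ be the number of non-terminal sites whose first visitor has size $s$; the weight of $q$ with respect to $x$ is $\prod_s t_s^{\alpha_s}$. Multi-line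 queues: a multi-line queue of type $(m_1,\dots,m_r)$ is a sequence $(q_1,\dots,q_r)$ of queues with $q_i$ of capacity $m_1+\dots+m_i$. Feed $q_1$ the all-$\infty$ word and $q_i$ the output of $q_{i-1}$. The weight $[\mathbf q]$ is the product over $i$ of the weight of $q_i$ with respect to its input. $Z_{\mathbf m}$ is the sum of $[\mathbf q]$ over all multi-line queues of type $\mathbf m$ (a polynomial in $t_1,\dots,t_r$); for the empty type ($r=0$), $Z=1$. *)

theory Defs
  imports Main
begin

text \<open>Sites are 0,...,n-1 (site k here is site k+1 of the paper), arranged cyclically.
  A word is a function nat => nat option on the sites; None stands for infinity (empty site),
  Some s for a particle of size s.\<close>

type_synonym word = "nat \<Rightarrow> nat option"

text \<open>Size of the particle at site j when the input word x is fed into the i-th queue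
  (every infinity is replaced by i).\<close>
definition psize :: "nat \<Rightarrow> word \<Rightarrow> nat \<Rightarrow> nat" where
  "psize i x j = (case x j of Some s \<Rightarrow> s | None \<Rightarrow> i)"

text \<open>Order in which the n particles enter: by size, ties broken by site index
  (sort_key is stable).\<close>
definition particles :: "nat \<Rightarrow> nat \<Rightarrow> word \<Rightarrow> (nat \<times> nat) list" where
  "particles n i x = sort_key fst (map (\<lambda>j. (psize i x j, j)) [0..<n])"

text \<open>Number of steps a particle starting at j travels before reaching the first
  terminal, unoccupied site (None if there is none: the particle is discarded).\<close>
definition stop_index :: "nat \<Rightarrow> nat set \<Rightarrow> word \<Rightarrow> nat \<Rightarrow> nat option" where
  "stop_index n T occ j =
     (if \<exists>k<n. (j + k) mod n \<in> T \<and> occ ((j + k) mod n) = None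
      then Some (LEAST k. (j + k) mod n \<in> T \<and> occ ((j + k) mod n) = None)
      else None)"

definition visited :: "nat \<Rightarrow> nat set \<Rightarrow> word \<Rightarrow> nat \<Rightarrow> nat set" where
  "visited n T occ j =
     (case stop_index n T occ j of
        Some k0 \<Rightarrow> {(j + k) mod n | k. k \<le> k0}
      | None \<Rightarrow> {(j + k) mod n | k. k < n})"

text \<open>State: (occupation of terminal sites, size of first visitor of each site).\<close>
definition qstep :: "nat \<Rightarrow> nat set \<Rightarrow> word \<times> word \<Rightarrow> nat \<times> nat \<Rightarrow> word \<times> word" where
  "qstep n T st p =
     (let occ = fst st; fv = snd st; s = fst p; j = snd p;
          V = visited n T occ j
      in ((case stop_index n T occ j of
             Some k0 \<Rightarrow> occ((j + k0) mod n := Some s)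
           | None \<Rightarrow> occ),
          (\<lambda>q. if fv q = None \<and> q \<in> V then Some s else fv q)))"

definition qrun :: "nat \<Rightarrow> nat set \<Rightarrow> nat \<Rightarrow> word \<Rightarrow> word \<times> word" where
  "qrun n T i x = foldl (qstep n T) (\<lambda>_. None, \<lambda>_. None) (particles n i x)"

definition queue_out :: "nat \<Rightarrow> nat set \<Rightarrow> nat \<Rightarrow> word \<Rightarrow> word" where
  "queue_out n T i x = (\<lambda>q. if q \<in> T then fst (qrun n T i x) q else None)"

definition alpha :: "nat \<Rightarrow> nat set \<Rightarrow> nat \<Rightarrow> word \<Rightarrow> nat \<Rightarrow> nat" where
  "alpha n T i x s = card {q. q < n \<and> q \<notin> T \<and> snd (qrun n T i x) q = Some s}"

text \<open>Weight of the queue w.r.t. input x (all particle sizes lie in 1..i).\<close>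
definition queue_weight :: "nat \<Rightarrow> nat set \<Rightarrow> nat \<Rightarrow> word \<Rightarrow> (nat \<Rightarrow> 'a::comm_ring_1) \<Rightarrow> 'a" where
  "queue_weight n T i x t = (\<Prod>s\<in>{1..i}. t s ^ alpha n T i x s)"

fun mlq_weight :: "nat \<Rightarrow> nat \<Rightarrow> word \<Rightarrow> nat set list \<Rightarrow> (nat \<Rightarrow> 'a::comm_ring_1) \<Rightarrow> 'a" where
  "mlq_weight n i x [] t = 1"
| "mlq_weight n i x (T # Ts) t =
     queue_weight n T i x t * mlq_weight n (Suc i) (queue_out n T i x) Ts t"

text \<open>Multi-line queues of type m: lists of terminal sets, the i-th (0-based) of
  capacity m_1 + ... + m_(i+1).\<close>
definition mlqs :: "nat \<Rightarrow> nat list \<Rightarrow> nat set list set" where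
  "mlqs n m = {Ts. length Ts = length m \<and>
     (\<forall>i<length m. Ts ! i \<subseteq> {..<n} \<and> card (Ts ! i) = sum_list (take (Suc i) m))}"

definition Z :: "nat \<Rightarrow> nat list \<Rightarrow> (nat \<Rightarrow> 'a::comm_ring_1) \<Rightarrow> 'a" where
  "Z n m t = (\<Sum>Ts\<in>mlqs n m. mlq_weight n 1 (\<lambda>_. None) Ts t)"

definition is_type :: "nat \<Rightarrow> nat list \<Rightarrow> bool" where
  "is_type n m \<longleftrightarrow> (\<forall>k\<in>set m. 0 < k) \<and> sum_list m \<le> n"

definition complete_hom :: "nat \<Rightarrow> 'a::comm_ring_1 list \<Rightarrow> 'a" where
  "complete_hom e xs =
     (\<Sum>a\<in>{a. (\<forall>k\<ge>length xs. a k = 0) \<and> (\<Sum>k<length xs. a k) = e}.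
        \<Prod>k<length xs. xs ! k ^ a k)"

definition hvars :: "nat list \<Rightarrow> (nat \<Rightarrow> 'a) \<Rightarrow> 'a list" where
  "hvars m t = concat (map (\<lambda>k. replicate (m ! k + (if k = length m - 1 then 1 else 0)) (t (Suc k)))
                          [0..<length m])"

end

theory Submission
  imports Defs "HOL-Library.Multiset"
begin

text \<open>Summed over all multi-line queues, the last queue contributes a factor that does
  not depend on the earlier queues: for any input word of type m^-, the weights of the last
  queue, summed over all its terminal sets, give the complete homogeneous polynomial in the
  sizes of the first c + 1 particles to enter, c being the capacity. This is proved for an
  arbitrary order of entry by induction on the number n of sites, deleting the site j where
  the first particle enters. If j is terminal, the particle settles there and the rest of
  the run is a run on the other n - 1 sites with one terminal site less; otherwise j is a
  non-terminal site first visited by that particle, contributing its weight, and the rest of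
  the run again lives on n - 1 sites. This is the recursion
  h_e(x, xs) = h_e(xs) + x h_(e-1)(x, xs). For a word of type m^- the first c + 1 particles
  are m_1 particles of size 1, ..., m_(r-1) of size r - 1 and m_r + 1 empty sites, of
  size r.\<close>

definition vacant :: "nat set \<Rightarrow> word \<Rightarrow> nat \<Rightarrow> bool" where
  "vacant T occ q \<longleftrightarrow> q \<in> T \<and> occ q = None"

lemma stop_index_eq_None_iff:
  "stop_index n T occ a = None \<longleftrightarrow> (\<forall>k<n. \<not> vacant T occ ((a + k) mod n))"
  unfolding stop_index_def vacant_def by auto

lemma stop_index_eq_Some_iff:
  "stop_index n T occ a = Some k \<longleftrightarrow>
     k < n \<and> vacant T occ ((a + k) mod n) \<and> (\<forall>k'<k. \<not> vacant T occ ((a + k') mod n))"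
  (is "_ \<longleftrightarrow> k < n \<and> ?P k \<and> (\<forall>k'<k. \<not> ?P k')")
proof
  assume S: "stop_index n T occ a = Some k"
  then obtain k1 where k1: "k1 < n" "?P k1" and k: "k = (LEAST k. ?P k)"
    by (auto simp: stop_index_def vacant_def split: if_splits)
  show "k < n \<and> ?P k \<and> (\<forall>k'<k. \<not> ?P k')"
    unfolding k using LeastI[of ?P, OF k1(2)] Least_le[of ?P, OF k1(2)] not_less_Least[of _ ?P] k1(1)
    by auto
next
  assume k: "k < n \<and> ?P k \<and> (\<forall>k'<k. \<not> ?P k')"
  then have "(LEAST k. ?P k) = k"
    by (intro Least_equality) (auto simp: not_less[symmetric])
  with k show "stop_index n T occ a = Some k"
    unfolding stop_index_def vacant_def by auto
qed

lemma visited_None: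
  "stop_index n T occ a = None \<Longrightarrow> visited n T occ a = (\<lambda>k. (a + k) mod n) ` {..<n}"
  by (auto simp: visited_def)

lemma visited_Some:
  "stop_index n T occ a = Some k0 \<Longrightarrow> visited n T occ a = (\<lambda>k. (a + k) mod n) ` {..k0}"
  by (auto simp: visited_def)

lemma add_mod_image_lessThan:
  assumes "0 < n"
  shows "(\<lambda>k. (a + k) mod n) ` {..<n} = {..<n::nat}"
proof
  show "{..<n} \<subseteq> (\<lambda>k. (a + k) mod n) ` {..<n}"
  proof
    fix q assume "q \<in> {..<n}"
    have "(a + (q + n - a mod n) mod n) mod n = (a mod n + (q + n - a mod n)) mod n"
      by (simp add: mod_add_left_eq mod_add_right_eq)
    also have "a mod n + (q + n - a mod n) = q + n"
      using mod_less_divisor[OF assms, of a] by linarith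
    finally show "q \<in> (\<lambda>k. (a + k) mod n) ` {..<n}"
      using \<open>q \<in> {..<n}\<close> assms by (intro image_eqI[of _ _ "(q + n - a mod n) mod n"]) auto
  qed
qed (use assms in auto)

lemma start_in_visited: "a < n \<Longrightarrow> a \<in> visited n T occ a"
  by (cases "stop_index n T occ a") (auto simp: visited_None visited_Some intro: image_eqI[of _ _ 0])

lemma qstep_Pair:
  "qstep n T (occ, fv) (s, a) =
    ((case stop_index n T occ a of Some k0 \<Rightarrow> occ((a + k0) mod n := Some s) | None \<Rightarrow> occ),
     (\<lambda>q. if fv q = None \<and> q \<in> visited n T occ a then Some s else fv q))"
  by (simp add: qstep_def Let_def)

lemma fst_qstep:
  "fst (qstep n T st (s, a)) =
    (case stop_index n T (fst st) a of Some k0 \<Rightarrow> (fst st)((a + k0) mod n := Some s) | None \<Rightarrow> fst st)"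
  by (cases st) (simp add: qstep_Pair split: option.split)

section \<open>Deleting a site from the cycle\<close>

definition del_site :: "nat \<Rightarrow> nat \<Rightarrow> nat" where
  "del_site j q = (if q < j then q else q - 1)"

definition ins_site :: "nat \<Rightarrow> nat \<Rightarrow> nat" where
  "ins_site j q = (if q < j then q else q + 1)"

definition del_sites :: "nat \<Rightarrow> nat set \<Rightarrow> nat set" where
  "del_sites j T = del_site j ` (T - {j})"

lemma del_site_less: "j < n \<Longrightarrow> q < n \<Longrightarrow> q \<noteq> j \<Longrightarrow> del_site j q < n - 1"
  by (auto simp: del_site_def)

lemma inj_on_del_site: "inj_on (del_site j) (- {j})"
  by (auto simp: del_site_def inj_on_def split: if_splits)

lemma del_site_eq_del_site_iff: "q \<noteq> j \<Longrightarrow> q' \<noteq> j \<Longrightarrow> del_site j q = del_site j q' \<longleftrightarrow> q = q'"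
  using inj_on_del_site[of j] by (auto simp: inj_on_def)

lemma ins_site_del_site: "q \<noteq> j \<Longrightarrow> ins_site j (del_site j q) = q"
  by (auto simp: del_site_def ins_site_def)

lemma del_site_ins_site [simp]: "del_site j (ins_site j q) = q"
  by (auto simp: del_site_def ins_site_def)

lemma ins_site_neq [simp]: "ins_site j q \<noteq> j"
  by (auto simp: ins_site_def)

lemma notin_ins_site_image [simp]: "j \<notin> ins_site j ` A"
  by (metis imageE ins_site_neq)

lemma ins_site_less: "q < n - 1 \<Longrightarrow> ins_site j q < n"
  by (auto simp: ins_site_def)

lemma inj_ins_site: "inj (ins_site j)"
  by (metis del_site_ins_site injI)

lemma del_site_mem_del_sites_iff: "q \<noteq> j \<Longrightarrow> del_site j q \<in> del_sites j T \<longleftrightarrow> q \<in> T"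
  using inj_on_del_site[of j] by (auto simp: del_sites_def inj_on_def)

lemma ins_site_image_del_sites: "ins_site j ` del_sites j T = T - {j}"
proof -
  have "ins_site j ` del_sites j T = (\<lambda>q. ins_site j (del_site j q)) ` (T - {j})"
    by (simp add: del_sites_def image_image)
  also have "\<dots> = T - {j}"
    by (rule image_cong[OF refl, where g = id, simplified]) (simp add: ins_site_del_site)
  finally show ?thesis .
qed

lemma del_sites_ins_site_image [simp]: "del_sites j (ins_site j ` A) = A"
proof -
  have "ins_site j ` A - {j} = ins_site j ` A" by auto
  then show ?thesis by (simp add: del_sites_def image_image)
qed

lemma mod_eq_minus_self: "(m::nat) \<le> x \<Longrightarrow> x < 2 * m \<Longrightarrow> x mod m = x - m"
  by (simp add: le_mod_geq)

text \<open>A walk on the n-cycle from a \<noteq> j reaches j after steps_to n j a steps; the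
  remaining steps are, after deleting j, the steps of the walk on the (n - 1)-cycle from
  del_site j a, renumbered by skip.\<close>

definition steps_to :: "nat \<Rightarrow> nat \<Rightarrow> nat \<Rightarrow> nat" where
  "steps_to n j a = (if a < j then j - a else j + n - a)"

definition skip :: "nat \<Rightarrow> nat \<Rightarrow> nat" where
  "skip K k = (if k < K then k else k - 1)"

definition unskip :: "nat \<Rightarrow> nat \<Rightarrow> nat" where
  "unskip K k = (if k < K then k else k + 1)"

lemma skip_unskip:
  "0 < K \<Longrightarrow> K < n \<Longrightarrow> k < n - 1 \<Longrightarrow> unskip K k < n \<and> unskip K k \<noteq> K \<and> skip K (unskip K k) = k"
  by (auto simp: skip_def unskip_def)

lemma steps_to_reaches:
  assumes "j < n" "a < n" "a \<noteq> j"
  shows "0 < steps_to n j a \<and> steps_to n j a < n \<and> (a + steps_to n j a) mod n = j"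
proof (cases "a < j")
  case False
  then have "a + (j + n - a) = j + n" using assms by linarith
  then show ?thesis using assms False by (simp add: steps_to_def)
qed (use assms in \<open>simp add: steps_to_def\<close>)

lemma del_site_walk_before:
  assumes "j < n" "a < n" "a \<noteq> j" "k < steps_to n j a"
  shows "(a + k) mod n \<noteq> j \<and> del_site j ((a + k) mod n) = (del_site j a + k) mod (n - 1)"
proof (cases "a < j")
  case True
  then have "a + k < j" using assms by (simp add: steps_to_def)
  then show ?thesis using assms True by (simp add: del_site_def)
next
  case False
  then have aj: "j < a" "k < j + n - a" using assms by (auto simp: steps_to_def)
  show ?thesis
  proof (cases "a + k < n")
    case True
    then show ?thesis using aj by (simp add: del_site_def)
  next
    case False
    have "(a + k) mod n = a + k - n" using False aj assms by (intro mod_eq_minus_self) auto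
    moreover have "(a - 1 + k) mod (n - 1) = a + k - n" using False aj assms
      by (subst mod_eq_minus_self) auto
    moreover have "a + k - n < j" using aj False by linarith
    ultimately show ?thesis using aj by (simp add: del_site_def)
  qed
qed

lemma del_site_walk_after:
  assumes "j < n" "a < n" "a \<noteq> j" "steps_to n j a < k" "k < n"
  shows "(a + k) mod n \<noteq> j \<and> del_site j ((a + k) mod n) = (del_site j a + (k - 1)) mod (n - 1)"
proof (cases "a < j")
  case True
  then have kk: "j - a < k" using assms by (simp add: steps_to_def)
  show ?thesis
  proof (cases "a + k < n")
    case True
    moreover have "j < a + k" using kk \<open>a < j\<close> by linarith
    ultimately show ?thesis using \<open>a < j\<close> kk by (simp add: del_site_def)
  next
    case False
    have "(a + k) mod n = a + k - n" using False assms by (intro mod_eq_minus_self) auto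
    moreover have "(a + (k - 1)) mod (n - 1) = a + k - n" using False kk assms
      by (subst mod_eq_minus_self) auto
    moreover have "a + k - n < j" using assms \<open>a < j\<close> by linarith
    ultimately show ?thesis using \<open>a < j\<close> by (simp add: del_site_def)
  qed
next
  case False
  then have aj: "j < a" "j + n - a < k" using assms by (auto simp: steps_to_def)
  have "(a + k) mod n = a + k - n" using aj assms by (intro mod_eq_minus_self) auto
  moreover have "(a - 1 + (k - 1)) mod (n - 1) = a + k - n - 1" using aj assms
    by (subst mod_eq_minus_self) auto
  moreover have "j < a + k - n" using aj assms by linarith
  ultimately show ?thesis using aj by (simp add: del_site_def)
qed

lemma del_site_walk:
  assumes "j < n" "a < n" "a \<noteq> j" "k < n" "k \<noteq> steps_to n j a"
  shows "(a + k) mod n \<noteq> j \<and>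
    del_site j ((a + k) mod n) = (del_site j a + skip (steps_to n j a) k) mod (n - 1)"
proof (cases "k < steps_to n j a")
  case True
  then show ?thesis using del_site_walk_before[OF assms(1-3) True] by (simp add: skip_def)
next
  case False
  then show ?thesis using del_site_walk_after[OF assms(1-3) _ assms(4)] assms(5)
    by (simp add: skip_def)
qed

section \<open>Simulating a queue on one site less\<close>

text \<open>A state on the n-cycle corresponds to a state on the (n - 1)-cycle with site j
  deleted, provided site j can never receive a particle.\<close>

definition del_sim :: "nat \<Rightarrow> nat \<Rightarrow> nat set \<Rightarrow> word \<times> word \<Rightarrow> word \<times> word \<Rightarrow> bool" where
  "del_sim n j T st st' \<longleftrightarrow>
     (\<forall>q<n. q \<noteq> j \<longrightarrow> fst st q = fst st' (del_site j q) \<and> snd st q = snd st' (del_site j q))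
     \<and> \<not> vacant T (fst st) j"

lemma del_sim_vacant:
  assumes "del_sim n j T st st'" "q < n" "q \<noteq> j"
  shows "vacant (del_sites j T) (fst st') (del_site j q) \<longleftrightarrow> vacant T (fst st) q"
  using assms by (auto simp: del_sim_def vacant_def del_site_mem_del_sites_iff)

context
  fixes n j a :: nat and T :: "nat set" and occ fv occ' fv' :: word
  assumes n2: "2 \<le> n" and jn: "j < n" and an: "a < n" and aj: "a \<noteq> j"
    and sim: "del_sim n j T (occ, fv) (occ', fv')"
begin

private abbreviation "K \<equiv> steps_to n j a"

lemma vacant_walk_del_site:
  assumes "k' < n - 1"
  shows "vacant (del_sites j T) occ' ((del_site j a + k') mod (n - 1))
    \<longleftrightarrow> vacant T occ ((a + unskip K k') mod n)"
proof -
  define k where "k = unskip K k'"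
  have k: "k < n" "k \<noteq> K" "skip K k = k'"
    using skip_unskip[OF _ _ assms] steps_to_reaches[OF jn an aj] by (auto simp: k_def)
  have "(a + k) mod n \<noteq> j" "del_site j ((a + k) mod n) = (del_site j a + k') mod (n - 1)"
    using del_site_walk[OF jn an aj k(1,2)] k(3) by simp_all
  then show ?thesis
    using del_sim_vacant[OF sim, of "(a + k) mod n"] jn by (simp add: k_def)
qed

lemma stop_index_neq_steps_to: "stop_index n T occ a = Some k0 \<Longrightarrow> k0 \<noteq> K"
  using steps_to_reaches[OF jn an aj] sim by (auto simp: stop_index_eq_Some_iff del_sim_def)

lemma stop_index_del_site:
  "stop_index (n - 1) (del_sites j T) occ' (del_site j a) = map_option (skip K) (stop_index n T occ a)"
proof (cases "stop_index n T occ a")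
  case None
  have "0 < K" "K < n" using steps_to_reaches[OF jn an aj] by auto
  with None have "stop_index (n - 1) (del_sites j T) occ' (del_site j a) = None"
    using vacant_walk_del_site skip_unskip by (simp add: stop_index_eq_None_iff)
  with None show ?thesis by simp
next
  case (Some k0)
  then have k0: "k0 < n" "vacant T occ ((a + k0) mod n)" "\<forall>k<k0. \<not> vacant T occ ((a + k) mod n)"
    by (simp_all add: stop_index_eq_Some_iff)
  have K: "0 < K" "K < n" using steps_to_reaches[OF jn an aj] by auto
  have "k0 \<noteq> K" using Some stop_index_neq_steps_to by simp
  then have sk0: "skip K k0 < n - 1" "unskip K (skip K k0) = k0"
    using k0(1) K by (auto simp: skip_def unskip_def)
  have "\<forall>k'<skip K k0. unskip K k' < k0"
    using \<open>k0 \<noteq> K\<close> by (auto simp: skip_def unskip_def)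
  with k0 sk0 show ?thesis
    using vacant_walk_del_site sk0 by (auto simp: Some stop_index_eq_Some_iff)
qed

lemma visited_del_site:
  assumes q: "q < n" "q \<noteq> j"
  shows "q \<in> visited n T occ a \<longleftrightarrow> del_site j q \<in> visited (n - 1) (del_sites j T) occ' (del_site j a)"
proof (cases "stop_index n T occ a")
  case None
  then have "stop_index (n - 1) (del_sites j T) occ' (del_site j a) = None"
    using stop_index_del_site by simp
  with None show ?thesis
    using q n2 del_site_less[OF jn q] by (simp add: visited_None add_mod_image_lessThan)
next
  case (Some k0)
  have K: "0 < K" "K < n" "(a + K) mod n = j" using steps_to_reaches[OF jn an aj] by auto
  have k0: "k0 < n" "k0 \<noteq> K"
    using Some stop_index_neq_steps_to by (auto simp: stop_index_eq_Some_iff)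
  have S': "stop_index (n - 1) (del_sites j T) occ' (del_site j a) = Some (skip K k0)"
    using Some stop_index_del_site by simp
  show ?thesis
    unfolding visited_Some[OF Some] visited_Some[OF S']
  proof
    assume "q \<in> (\<lambda>k. (a + k) mod n) ` {..k0}"
    then obtain k where k: "k \<le> k0" "q = (a + k) mod n" by blast
    then have "k \<noteq> K" using K q by auto
    then have "del_site j q = (del_site j a + skip K k) mod (n - 1)"
      using del_site_walk[OF jn an aj, of k] k k0 by simp
    moreover have "skip K k \<le> skip K k0" using k by (auto simp: skip_def)
    ultimately show "del_site j q \<in> (\<lambda>k. (del_site j a + k) mod (n - 1)) ` {..skip K k0}" by auto
  next
    assume "del_site j q \<in> (\<lambda>k. (del_site j a + k) mod (n - 1)) ` {..skip K k0}"
    then obtain k' where k': "k' \<le> skip K k0" "del_site j q = (del_site j a + k') mod (n - 1)"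
      by blast
    have "k' < n - 1" using k' k0 K by (simp add: skip_def split: if_split_asm)
    then have kk: "unskip K k' < n" "unskip K k' \<noteq> K" "skip K (unskip K k') = k'"
      using skip_unskip K by auto
    have "unskip K k' \<le> k0" using k' k0 by (auto simp: skip_def unskip_def split: if_split_asm)
    moreover have "(a + unskip K k') mod n = q"
      using del_site_walk[OF jn an aj kk(1,2)] kk(3) k'(2) q del_site_eq_del_site_iff by metis
    ultimately show "q \<in> (\<lambda>k. (a + k) mod n) ` {..k0}" by auto
  qed
qed

lemma qstep_del_sim_off_start:
  "del_sim n j T (qstep n T (occ, fv) (s, a)) (qstep (n - 1) (del_sites j T) (occ', fv') (s, del_site j a))"
proof (cases "stop_index n T occ a")
  case None
  then have "stop_index (n - 1) (del_sites j T) occ' (del_site j a) = None"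
    using stop_index_del_site by simp
  with None show ?thesis
    using sim visited_del_site unfolding qstep_Pair del_sim_def by (auto simp: vacant_def)
next
  case (Some k0)
  define q0 where "q0 = (a + k0) mod n"
  have k0: "k0 < n" "k0 \<noteq> K"
    using Some stop_index_neq_steps_to by (auto simp: stop_index_eq_Some_iff)
  have S': "stop_index (n - 1) (del_sites j T) occ' (del_site j a) = Some (skip K k0)"
    using Some stop_index_del_site by simp
  have q0: "q0 \<noteq> j" "del_site j q0 = (del_site j a + skip K k0) mod (n - 1)"
    using del_site_walk[OF jn an aj k0] by (simp_all add: q0_def)
  have "q = q0 \<longleftrightarrow> del_site j q = del_site j q0" if "q \<noteq> j" for q
    using del_site_eq_del_site_iff[OF that q0(1)] by blast
  then show ?thesis
    using sim visited_del_site q0 unfolding qstep_Pair Some S' option.case q0_def[symmetric] del_sim_def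
    by (auto simp: vacant_def)
qed

end

context
  fixes n j :: nat and T :: "nat set" and occ :: word
  assumes jn: "j < n" and occupied: "\<not> vacant T occ j"
begin

private lemma add_Suc_mod: "(j + Suc k) mod n = (Suc j mod n + k) mod n"
  by (simp add: mod_add_left_eq)

lemma stop_index_occupied_start:
  "stop_index n T occ j = map_option Suc (stop_index n T occ (Suc j mod n))"
proof (cases "stop_index n T occ (Suc j mod n)")
  case None
  have "\<not> vacant T occ ((j + k) mod n)" if "k < n" for k
    using None occupied jn that add_Suc_mod
    by (cases k) (auto simp: stop_index_eq_None_iff)
  then have "stop_index n T occ j = None" by (simp add: stop_index_eq_None_iff)
  with None show ?thesis by simp
next
  case (Some k0)
  then have k0: "k0 < n" "vacant T occ ((Suc j mod n + k0) mod n)"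
    "\<forall>k<k0. \<not> vacant T occ ((Suc j mod n + k) mod n)"
    by (simp_all add: stop_index_eq_Some_iff)
  have "(Suc j mod n + (n - 1)) mod n = j"
    using add_Suc_mod[of "n - 1"] jn by simp
  then have "Suc k0 < n" using k0 occupied by (metis Suc_lessI diff_Suc_1)
  moreover have "\<not> vacant T occ ((j + k) mod n)" if "k < Suc k0" for k
    using that k0(3) occupied jn add_Suc_mod by (cases k) auto
  ultimately have "stop_index n T occ j = Some (Suc k0)"
    using k0(2) add_Suc_mod by (simp add: stop_index_eq_Some_iff del: add_Suc_right)
  with Some show ?thesis by simp
qed

lemma visited_occupied_start: "visited n T occ j = insert j (visited n T occ (Suc j mod n))"
proof (cases "stop_index n T occ (Suc j mod n)")
  case None
  then have "stop_index n T occ j = None" by (simp add: stop_index_occupied_start)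
  with None show ?thesis using jn by (simp add: visited_None add_mod_image_lessThan insert_absorb)
next
  case (Some k0)
  then have "stop_index n T occ j = Some (Suc k0)" by (simp add: stop_index_occupied_start)
  with Some show ?thesis
    using jn by (simp add: visited_Some atMost_Suc_eq_insert_0 image_image add_Suc_mod del: add_Suc_right)
qed

lemma qstep_occupied_start:
  "fst (qstep n T (occ, fv) (s, j)) = fst (qstep n T (occ, fv) (s, Suc j mod n))"
  "q \<noteq> j \<Longrightarrow> snd (qstep n T (occ, fv) (s, j)) q = snd (qstep n T (occ, fv) (s, Suc j mod n)) q"
  using add_Suc_mod visited_occupied_start
  by (auto simp: qstep_Pair stop_index_occupied_start split: option.split simp del: add_Suc_right)

end

text \<open>A particle entering at the occupied site j moves on at once, so in the reduced
  queue it enters at the successor of j.\<close>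

definition del_start :: "nat \<Rightarrow> nat \<Rightarrow> nat \<Rightarrow> nat" where
  "del_start n j a = del_site j (if a = j then Suc j mod n else a)"

lemma del_start_less: "2 \<le> n \<Longrightarrow> j < n \<Longrightarrow> a < n \<Longrightarrow> del_start n j a < n - 1"
  using del_site_less[of j n] by (auto simp: del_start_def mod_Suc)

lemma qstep_del_sim:
  assumes n2: "2 \<le> n" and jn: "j < n" and an: "a < n" and sim: "del_sim n j T st st'"
  shows "del_sim n j T (qstep n T st (s, a)) (qstep (n - 1) (del_sites j T) st' (s, del_start n j a))"
proof -
  obtain occ fv occ' fv' where st: "st = (occ, fv)" "st' = (occ', fv')" by fastforce
  show ?thesis
  proof (cases "a = j")
    case False
    then show ?thesis using qstep_del_sim_off_start[OF n2 jn an False] sim st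
      by (simp add: del_start_def)
  next
    case True
    have occupied: "\<not> vacant T occ j" using sim st by (simp add: del_sim_def)
    have "Suc j mod n < n" "Suc j mod n \<noteq> j" using n2 jn by (auto simp: mod_Suc)
    from qstep_del_sim_off_start[OF n2 jn this sim[unfolded st]]
    show ?thesis
      using True st qstep_occupied_start[OF jn occupied] unfolding del_sim_def del_start_def
      by simp
  qed
qed

lemma foldl_qstep_del_sim:
  assumes "2 \<le> n" "j < n" "\<forall>p\<in>set L. snd p < n" "del_sim n j T st st'"
  shows "del_sim n j T (foldl (qstep n T) st L)
    (foldl (qstep (n - 1) (del_sites j T)) st' (map (\<lambda>(s, a). (s, del_start n j a)) L))"
  using assms(3,4)
proof (induction L arbitrary: st st')
  case (Cons p L)
  then show ?case using qstep_del_sim[OF assms(1,2)] by (cases p) simp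
qed simp

abbreviation empty_state :: "word \<times> word" where
  "empty_state \<equiv> (\<lambda>_. None, \<lambda>_. None)"

definition visitor_weight :: "(nat \<Rightarrow> 'a::comm_ring_1) \<Rightarrow> nat option \<Rightarrow> 'a" where
  "visitor_weight t v = (case v of None \<Rightarrow> 1 | Some s \<Rightarrow> t s)"

text \<open>The weight of a queue when the particles of L, given as (size, entry site), enter in
  the order of L. Allowing an arbitrary order is what makes the induction on n work.\<close>

definition run_weight :: "nat \<Rightarrow> nat set \<Rightarrow> (nat \<times> nat) list \<Rightarrow> (nat \<Rightarrow> 'a::comm_ring_1) \<Rightarrow> 'a" where
  "run_weight n T L t =
     (\<Prod>q\<in>{..<n} - T. visitor_weight t (snd (foldl (qstep n T) empty_state L) q))"

lemma first_visitor_foldl_keep: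
  "snd st q = Some v \<Longrightarrow> snd (foldl (qstep n T) st L) q = Some v"
proof (induction L arbitrary: st)
  case (Cons p L)
  then show ?case by (cases st, cases p) (simp add: qstep_Pair)
qed simp

lemma first_visitor_start:
  "a < n \<Longrightarrow> snd (qstep n T (occ, fv) (s, a)) a = (case fv a of None \<Rightarrow> Some s | Some v \<Rightarrow> Some v)"
  using start_in_visited[of a n T occ] by (simp add: qstep_Pair split: option.split)

lemma prod_nonterminal_del_site:
  assumes jn: "j < n" and sim: "del_sim n j T st st'"
  shows "(\<Prod>q\<in>{..<n} - T - {j}. visitor_weight t (snd st q))
    = (\<Prod>q\<in>{..<n - 1} - del_sites j T. visitor_weight t (snd st' q))"
proof (rule prod.reindex_bij_witness[where i = "ins_site j" and j = "del_site j"])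
  fix q assume q: "q \<in> {..<n} - T - {j}"
  then show "ins_site j (del_site j q) = q" by (simp add: ins_site_del_site)
  show "del_site j q \<in> {..<n - 1} - del_sites j T"
    using q del_site_less[OF jn] del_site_mem_del_sites_iff[of q j T] by auto
  show "visitor_weight t (snd st' (del_site j q)) = visitor_weight t (snd st q)"
    using q sim by (simp add: del_sim_def)
next
  fix q assume q: "q \<in> {..<n - 1} - del_sites j T"
  then show "del_site j (ins_site j q) = q" by simp
  show "ins_site j q \<in> {..<n} - T - {j}"
    using q ins_site_less[of q n j] del_site_mem_del_sites_iff[of "ins_site j q" j T] by auto
qed

lemma qstep_empty_terminal:
  assumes "j < n" "j \<in> T"
  shows "qstep n T empty_state (s, j) = ((\<lambda>_. None)(j := Some s), (\<lambda>_. None)(j := Some s))"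
proof -
  have S: "stop_index n T (\<lambda>_. None) j = Some 0"
    using assms by (simp add: stop_index_eq_Some_iff vacant_def)
  then have "visited n T (\<lambda>_. None) j = {j}" using assms by (simp add: visited_Some)
  with S show ?thesis using assms by (auto simp: qstep_Pair)
qed

lemma run_weight_terminal_start:
  assumes "2 \<le> n" "j < n" "j \<in> T" "\<forall>p\<in>set L. snd p < n"
  shows "run_weight n T ((s, j) # L) t
    = run_weight (n - 1) (del_sites j T) (map (\<lambda>(s, a). (s, del_start n j a)) L) t"
proof -
  have "del_sim n j T (qstep n T empty_state (s, j)) empty_state"
    using assms by (simp add: qstep_empty_terminal del_sim_def vacant_def)
  from foldl_qstep_del_sim[OF assms(1,2,4) this]
  have "del_sim n j T (foldl (qstep n T) empty_state ((s, j) # L))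
    (foldl (qstep (n - 1) (del_sites j T)) empty_state (map (\<lambda>(s, a). (s, del_start n j a)) L))"
    by simp
  moreover have "{..<n} - T - {j} = {..<n} - T" using assms(3) by auto
  ultimately show ?thesis
    unfolding run_weight_def using prod_nonterminal_del_site[OF assms(2)] by metis
qed

lemma run_weight_nonterminal_start:
  assumes "2 \<le> n" "j < n" "j \<notin> T" "\<forall>p\<in>set L. snd p < n"
  shows "run_weight n T ((s, j) # L) t
    = t s * run_weight (n - 1) (del_sites j T) (map (\<lambda>(s, a). (s, del_start n j a)) ((s, j) # L)) t"
proof -
  let ?st = "foldl (qstep n T) empty_state ((s, j) # L)"
  have "del_sim n j T empty_state empty_state" using assms(3) by (simp add: del_sim_def vacant_def)
  from foldl_qstep_del_sim[OF assms(1,2) _ this, of "(s, j) # L"]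
  have sim: "del_sim n j T ?st
    (foldl (qstep (n - 1) (del_sites j T)) empty_state (map (\<lambda>(s, a). (s, del_start n j a)) ((s, j) # L)))"
    using assms(2,4) by simp
  have "snd ?st j = Some s"
    using first_visitor_foldl_keep first_visitor_start[OF assms(2)] by simp
  moreover have "(\<Prod>q\<in>{..<n} - T. visitor_weight t (snd ?st q))
    = visitor_weight t (snd ?st j) * (\<Prod>q\<in>{..<n} - T - {j}. visitor_weight t (snd ?st q))"
    by (rule prod.remove) (use assms(2,3) in auto)
  ultimately show ?thesis
    unfolding run_weight_def prod_nonterminal_del_site[OF assms(2) sim] by (simp add: visitor_weight_def)
qed

section \<open>Complete homogeneous polynomials\<close>

definition weak_compositions :: "nat \<Rightarrow> nat \<Rightarrow> (nat \<Rightarrow> nat) set" where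
  "weak_compositions l e = {a. (\<forall>k\<ge>l. a k = 0) \<and> (\<Sum>k<l. a k) = e}"

lemma complete_hom_eq_sum_weak_compositions:
  "complete_hom e xs = (\<Sum>a\<in>weak_compositions (length xs) e. \<Prod>k<length xs. xs ! k ^ a k)"
  by (simp add: complete_hom_def weak_compositions_def)

lemma finite_weak_compositions: "finite (weak_compositions l e)"
proof -
  have "inj_on (\<lambda>a. map a [0..<l]) (weak_compositions l e)"
  proof (rule inj_onI)
    fix a b assume ab: "a \<in> weak_compositions l e" "b \<in> weak_compositions l e"
      and "map a [0..<l] = map b [0..<l]"
    then have "a k = b k" if "k < l" for k
      using that by (metis add_0 diff_zero nth_map_upt)
    with ab show "a = b"
      unfolding weak_compositions_def fun_eq_iff by (metis (mono_tags) mem_Collect_eq not_less)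
  qed
  moreover have "(\<lambda>a. map a [0..<l]) ` weak_compositions l e \<subseteq> {xs. set xs \<subseteq> {..e} \<and> length xs = l}"
    by (auto simp: weak_compositions_def intro!: member_le_sum[of _ "{..<l}", simplified])
  then have "finite ((\<lambda>a. map a [0..<l]) ` weak_compositions l e)"
    by (rule finite_subset) (rule finite_lists_length_eq, simp)
  ultimately show ?thesis using finite_imageD by blast
qed

lemma complete_hom_Nil: "complete_hom e [] = (if e = 0 then 1 else 0)"
proof -
  have "weak_compositions 0 e = (if e = 0 then {\<lambda>_. 0} else {})"
    by (auto simp: weak_compositions_def)
  then show ?thesis by (simp add: complete_hom_eq_sum_weak_compositions)
qed

lemma complete_hom_Cons:
  "complete_hom e (x # xs) = (\<Sum>i\<le>e. x ^ i * complete_hom (e - i) xs)"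
proof -
  let ?l = "length xs"
  have "complete_hom e (x # xs) = (\<Sum>a\<in>weak_compositions (Suc ?l) e. \<Prod>k<Suc ?l. (x # xs) ! k ^ a k)"
    by (simp add: complete_hom_eq_sum_weak_compositions)
  also have "\<dots> = (\<Sum>p\<in>(SIGMA i:{..e}. weak_compositions ?l (e - i)).
      x ^ fst p * (\<Prod>k<?l. xs ! k ^ snd p k))"
  proof (rule sum.reindex_bij_witness[where i = "\<lambda>p. case_nat (fst p) (snd p)"
        and j = "\<lambda>a. (a 0, \<lambda>k. a (Suc k))"])
    fix a assume a: "a \<in> weak_compositions (Suc ?l) e"
    have sum: "(\<Sum>k<Suc ?l. a k) = a 0 + (\<Sum>k<?l. a (Suc k))" by (rule sum.lessThan_Suc_shift)
    show "case_nat (fst (a 0, \<lambda>k. a (Suc k))) (snd (a 0, \<lambda>k. a (Suc k))) = a"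
      by (simp add: fun_eq_iff split: nat.split)
    show "(a 0, \<lambda>k. a (Suc k)) \<in> (SIGMA i:{..e}. weak_compositions ?l (e - i))"
      using a sum by (auto simp: weak_compositions_def)
    show "x ^ fst (a 0, \<lambda>k. a (Suc k)) * (\<Prod>k<?l. xs ! k ^ snd (a 0, \<lambda>k. a (Suc k)) k)
      = (\<Prod>k<Suc ?l. (x # xs) ! k ^ a k)"
      by (subst prod.lessThan_Suc_shift) simp
  next
    fix p assume p: "p \<in> (SIGMA i:{..e}. weak_compositions ?l (e - i))"
    show "(case_nat (fst p) (snd p) 0, \<lambda>k. case_nat (fst p) (snd p) (Suc k)) = p" by simp
    have "\<forall>k\<ge>Suc ?l. case_nat (fst p) (snd p) k = 0"
      using p by (auto simp: weak_compositions_def split: nat.split)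
    moreover have "(\<Sum>k<Suc ?l. case_nat (fst p) (snd p) k) = fst p + (\<Sum>k<?l. snd p k)"
      by (subst sum.lessThan_Suc_shift) simp
    ultimately show "case_nat (fst p) (snd p) \<in> weak_compositions (Suc ?l) e"
      using p by (auto simp: weak_compositions_def)
  qed
  also have "\<dots> = (\<Sum>i\<le>e. \<Sum>b\<in>weak_compositions ?l (e - i). x ^ i * (\<Prod>k<?l. xs ! k ^ b k))"
    by (subst sum.Sigma) (simp_all add: finite_weak_compositions split_def)
  also have "\<dots> = (\<Sum>i\<le>e. x ^ i * complete_hom (e - i) xs)"
    by (simp add: complete_hom_eq_sum_weak_compositions sum_distrib_left)
  finally show ?thesis .
qed

lemma complete_hom_0 [simp]: "complete_hom 0 xs = 1"
  by (induction xs) (simp_all add: complete_hom_Nil complete_hom_Cons)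

lemma complete_hom_Suc_Cons:
  "complete_hom (Suc e) (x # xs) = complete_hom (Suc e) xs + x * complete_hom e (x # xs)"
proof -
  have "complete_hom (Suc e) (x # xs) = (\<Sum>i\<le>Suc e. x ^ i * complete_hom (Suc e - i) xs)"
    by (rule complete_hom_Cons)
  also have "\<dots> = complete_hom (Suc e) xs + (\<Sum>i\<le>e. x ^ Suc i * complete_hom (e - i) xs)"
    by (subst sum.atMost_Suc_shift) simp
  also have "(\<Sum>i\<le>e. x ^ Suc i * complete_hom (e - i) xs) = x * complete_hom e (x # xs)"
    by (simp add: complete_hom_Cons sum_distrib_left mult.assoc)
  finally show ?thesis .
qed

definition terminal_sets :: "nat \<Rightarrow> nat \<Rightarrow> nat set set" where
  "terminal_sets n c = {T. T \<subseteq> {..<n} \<and> card T = c}"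

lemma finite_terminal_sets: "finite (terminal_sets n c)"
  by (rule finite_subset[of _ "Pow {..<n}"]) (auto simp: terminal_sets_def)

lemma terminal_sets_0: "terminal_sets n 0 = {{}}"
  using finite_subset[of _ "{..<n}"] by (auto simp: terminal_sets_def)

lemma terminal_sets_self: "terminal_sets n n = {{..<n}}"
  using card_subset_eq[of "{..<n}"] by (auto simp: terminal_sets_def)

lemma del_sites_in_terminal_sets:
  assumes "j < n" "T \<in> terminal_sets n c"
  shows "del_sites j T \<in> terminal_sets (n - 1) (card (T - {j}))"
proof -
  have "finite T" using assms(2) by (auto simp: terminal_sets_def dest: finite_subset)
  then have "card (del_sites j T) = card (T - {j})"
    unfolding del_sites_def by (intro card_image inj_on_subset[OF inj_on_del_site]) auto
  moreover have "del_sites j T \<subseteq> {..<n - 1}"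
    using assms del_site_less[OF assms(1)] by (auto simp: del_sites_def terminal_sets_def)
  ultimately show ?thesis by (simp add: terminal_sets_def)
qed

lemma ins_site_image_in_terminal_sets:
  assumes "A \<in> terminal_sets (n - 1) c"
  shows "ins_site j ` A \<in> terminal_sets n c"
proof -
  have "card (ins_site j ` A) = card A" by (rule card_image[OF inj_on_subset[OF inj_ins_site]]) simp
  moreover have "ins_site j ` A \<subseteq> {..<n}" using assms ins_site_less by (auto simp: terminal_sets_def)
  ultimately show ?thesis using assms by (simp add: terminal_sets_def)
qed

lemma sum_terminal_sets_member:
  assumes "j < n" "1 \<le> c"
  shows "(\<Sum>T\<in>{T \<in> terminal_sets n c. j \<in> T}. g (del_sites j T)) = (\<Sum>A\<in>terminal_sets (n - 1) (c - 1). g A)"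
proof (rule sum.reindex_bij_witness[where i = "\<lambda>A. insert j (ins_site j ` A)" and j = "del_sites j"])
  fix T assume T: "T \<in> {T \<in> terminal_sets n c. j \<in> T}"
  then show "insert j (ins_site j ` del_sites j T) = T" by (auto simp: ins_site_image_del_sites)
  have "finite T" using T by (auto simp: terminal_sets_def dest: finite_subset)
  then show "del_sites j T \<in> terminal_sets (n - 1) (c - 1)"
    using del_sites_in_terminal_sets[OF assms(1), of T c] T by (simp add: terminal_sets_def)
next
  fix A assume A: "A \<in> terminal_sets (n - 1) (c - 1)"
  show "del_sites j (insert j (ins_site j ` A)) = A"
    using del_sites_ins_site_image[of j A] by (simp add: del_sites_def)
  have "finite A" using A by (auto simp: terminal_sets_def dest: finite_subset)
  then show "insert j (ins_site j ` A) \<in> {T \<in> terminal_sets n c. j \<in> T}"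
    using ins_site_image_in_terminal_sets[OF A, of j] assms
    by (auto simp: terminal_sets_def)
qed simp

lemma sum_terminal_sets_nonmember:
  assumes "j < n"
  shows "(\<Sum>T\<in>{T \<in> terminal_sets n c. j \<notin> T}. g (del_sites j T)) = (\<Sum>A\<in>terminal_sets (n - 1) c. g A)"
proof (rule sum.reindex_bij_witness[where i = "\<lambda>A. ins_site j ` A" and j = "del_sites j"])
  fix T assume T: "T \<in> {T \<in> terminal_sets n c. j \<notin> T}"
  then show "ins_site j ` del_sites j T = T" by (auto simp: ins_site_image_del_sites)
  show "del_sites j T \<in> terminal_sets (n - 1) c"
    using del_sites_in_terminal_sets[OF assms, of T c] T by (simp add: terminal_sets_def)
next
  fix A assume "A \<in> terminal_sets (n - 1) c"
  then show "ins_site j ` A \<in> {T \<in> terminal_sets n c. j \<notin> T}"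
    using ins_site_image_in_terminal_sets by auto
qed simp_all

lemma sum_terminal_sets_split:
  "(\<Sum>T\<in>terminal_sets n c. g T)
    = (\<Sum>T\<in>{T \<in> terminal_sets n c. j \<in> T}. g T) + (\<Sum>T\<in>{T \<in> terminal_sets n c. j \<notin> T}. g T)"
  by (subst sum.union_disjoint[symmetric]) (auto simp: finite_terminal_sets intro: sum.cong)

lemma sum_run_weight_member:
  assumes "2 \<le> n" "j < n" "1 \<le> c" "\<forall>p\<in>set L. snd p < n"
  shows "(\<Sum>T\<in>{T \<in> terminal_sets n c. j \<in> T}. run_weight n T ((s, j) # L) t)
    = (\<Sum>T\<in>terminal_sets (n - 1) (c - 1). run_weight (n - 1) T (map (\<lambda>(s, a). (s, del_start n j a)) L) t)"
proof -
  have "(\<Sum>T\<in>{T \<in> terminal_sets n c. j \<in> T}. run_weight n T ((s, j) # L) t)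
    = (\<Sum>T\<in>{T \<in> terminal_sets n c. j \<in> T}.
         run_weight (n - 1) (del_sites j T) (map (\<lambda>(s, a). (s, del_start n j a)) L) t)"
    using run_weight_terminal_start[OF assms(1,2) _ assms(4)] by (intro sum.cong) auto
  also have "\<dots> = (\<Sum>T\<in>terminal_sets (n - 1) (c - 1).
      run_weight (n - 1) T (map (\<lambda>(s, a). (s, del_start n j a)) L) t)"
    by (rule sum_terminal_sets_member[OF assms(2,3)])
  finally show ?thesis .
qed

lemma sum_run_weight_nonmember:
  assumes "2 \<le> n" "j < n" "\<forall>p\<in>set L. snd p < n"
  shows "(\<Sum>T\<in>{T \<in> terminal_sets n c. j \<notin> T}. run_weight n T ((s, j) # L) t)
    = t s * (\<Sum>T\<in>terminal_sets (n - 1) c.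
        run_weight (n - 1) T (map (\<lambda>(s, a). (s, del_start n j a)) ((s, j) # L)) t)"
proof -
  have "(\<Sum>T\<in>{T \<in> terminal_sets n c. j \<notin> T}. run_weight n T ((s, j) # L) t)
    = (\<Sum>T\<in>{T \<in> terminal_sets n c. j \<notin> T}.
         t s * run_weight (n - 1) (del_sites j T) (map (\<lambda>(s, a). (s, del_start n j a)) ((s, j) # L)) t)"
    using run_weight_nonterminal_start[OF assms(1,2) _ assms(3)] by (intro sum.cong) auto
  also have "\<dots> = (\<Sum>T\<in>terminal_sets (n - 1) c.
      t s * run_weight (n - 1) T (map (\<lambda>(s, a). (s, del_start n j a)) ((s, j) # L)) t)"
    by (rule sum_terminal_sets_nonmember[OF assms(2)])
  finally show ?thesis by (simp add: sum_distrib_left)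
qed

lemma sum_run_weight_one_site:
  assumes "c \<le> 1" "L = (s, 0) # L'"
  shows "(\<Sum>T\<in>terminal_sets 1 c. run_weight 1 T L t) = complete_hom (1 - c) (map (t \<circ> fst) (take (Suc c) L))"
proof (cases c)
  case 0
  have "snd (foldl (qstep 1 {}) empty_state L) 0 = Some s"
    using first_visitor_foldl_keep first_visitor_start[of 0 1] assms(2) by simp
  then show ?thesis
    using 0 assms(2) by (simp add: terminal_sets_0 run_weight_def visitor_weight_def lessThan_Suc complete_hom_Cons complete_hom_Nil)
next
  case (Suc c')
  then show ?thesis using assms(1) by (simp add: terminal_sets_self run_weight_def)
qed

lemma sum_run_weight_step:
  fixes t :: "nat \<Rightarrow> 'a::comm_ring_1"
  assumes n2: "2 \<le> n" and j: "j < n" and sites: "\<forall>p\<in>set L. snd p < n"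
    and c: "c \<le> n" "c \<le> length L"
    and IH: "\<And>L c. \<forall>p\<in>set L. snd p < n - 1 \<Longrightarrow> c \<le> n - 1 \<Longrightarrow> c < length L \<Longrightarrow>
      (\<Sum>T\<in>terminal_sets (n - 1) c. run_weight (n - 1) T L t)
        = complete_hom (n - 1 - c) (map (t \<circ> fst) (take (Suc c) L))"
  shows "(\<Sum>T\<in>terminal_sets n c. run_weight n T ((s, j) # L) t)
    = complete_hom (n - c) (t s # map (t \<circ> fst) (take c L))"
proof -
  define xs where "xs = map (t \<circ> fst) (take c L)"
  let ?del = "map (\<lambda>(s, a). (s, del_start n j a))"
  have sites': "\<forall>p\<in>set (?del ((s, j) # L)). snd p < n - 1"
    using del_start_less[OF n2 j] sites j by auto
  have member: "(\<Sum>T\<in>{T \<in> terminal_sets n c. j \<in> T}. run_weight n T ((s, j) # L) t)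
    = complete_hom (n - c) xs"
  proof (cases c)
    case 0
    then have "{T \<in> terminal_sets n c. j \<in> T} = {}" by (simp add: terminal_sets_0)
    moreover have "complete_hom (n - c) xs = 0" using n2 0 by (simp add: xs_def complete_hom_Nil)
    ultimately show ?thesis by (metis sum.empty)
  next
    case (Suc c')
    have "(\<Sum>T\<in>{T \<in> terminal_sets n c. j \<in> T}. run_weight n T ((s, j) # L) t)
      = (\<Sum>T\<in>terminal_sets (n - 1) c'. run_weight (n - 1) T (?del L) t)"
      using sum_run_weight_member[OF n2 j _ sites, where c = c] Suc by simp
    also have "\<dots> = complete_hom (n - 1 - c') (map (t \<circ> fst) (take (Suc c') (?del L)))"
      by (rule IH) (use sites' Suc c in auto)
    also have "map (t \<circ> fst) (take (Suc c') (?del L)) = xs"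
      by (simp add: xs_def Suc take_map split_def comp_def)
    finally show ?thesis using Suc by simp
  qed
  have nonmember: "(\<Sum>T\<in>{T \<in> terminal_sets n c. j \<notin> T}. run_weight n T ((s, j) # L) t)
    = (if c < n then t s * complete_hom (n - Suc c) (t s # xs) else 0)"
  proof (cases "c < n")
    case True
    have "(\<Sum>T\<in>{T \<in> terminal_sets n c. j \<notin> T}. run_weight n T ((s, j) # L) t)
      = t s * (\<Sum>T\<in>terminal_sets (n - 1) c. run_weight (n - 1) T (?del ((s, j) # L)) t)"
      by (rule sum_run_weight_nonmember[OF n2 j sites])
    also have "\<dots> = t s * complete_hom (n - 1 - c) (map (t \<circ> fst) (take (Suc c) (?del ((s, j) # L))))"
      using IH[OF sites'] True c by simp
    also have "map (t \<circ> fst) (take (Suc c) (?del ((s, j) # L))) = t s # xs"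
      by (simp add: xs_def take_map split_def comp_def)
    finally show ?thesis using True by simp
  next
    case False
    then have "{T \<in> terminal_sets n c. j \<notin> T} = {}" using c j by (simp add: terminal_sets_self)
    then show ?thesis using False by (metis sum.empty)
  qed
  have "(\<Sum>T\<in>terminal_sets n c. run_weight n T ((s, j) # L) t)
    = complete_hom (n - c) xs + (if c < n then t s * complete_hom (n - Suc c) (t s # xs) else 0)"
    using sum_terminal_sets_split[of "\<lambda>T. run_weight n T ((s, j) # L) t" n c j] member nonmember
    by simp
  also have "\<dots> = complete_hom (n - c) (t s # xs)"
    using complete_hom_Suc_Cons[of "n - Suc c" "t s" xs] c
    by (cases "c < n") (simp_all add: Suc_diff_Suc)
  finally show ?thesis by (simp add: xs_def)
qed

lemma sum_run_weight:
  "0 < n \<Longrightarrow> \<forall>p\<in>set L. snd p < n \<Longrightarrow> c \<le> n \<Longrightarrow> c < length L \<Longrightarrow>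
   (\<Sum>T\<in>terminal_sets n c. run_weight n T L t) = complete_hom (n - c) (map (t \<circ> fst) (take (Suc c) L))"
proof (induction n arbitrary: L c)
  case (Suc n)
  obtain s j L' where L: "L = (s, j) # L'" using Suc.prems(4) by (cases L) auto
  show ?case
  proof (cases "n = 0")
    case True
    then show ?thesis using sum_run_weight_one_site Suc.prems(2,3) L by (simp add: comp_def)
  next
    case False
    then show ?thesis
      using sum_run_weight_step[of "Suc n" j L' c t s] Suc.IH Suc.prems(2-4) L by (simp add: comp_def)
  qed
qed simp

section \<open>Queue weights as run weights\<close>

definition occupants :: "nat set \<Rightarrow> word \<Rightarrow> nat multiset" where
  "occupants T occ = (\<Sum>q\<in>T. case occ q of None \<Rightarrow> {#} | Some s \<Rightarrow> {#s#})"

lemma occupants_upd: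
  assumes "finite T" "q0 \<in> T" "occ q0 = None"
  shows "occupants T (occ(q0 := Some s)) = add_mset s (occupants T occ)"
proof -
  let ?f = "\<lambda>occ q. case occ q of None \<Rightarrow> {#} | Some s \<Rightarrow> {#s#}"
  have "sum (?f (occ(q0 := Some s))) (T - {q0}) = sum (?f occ) (T - {q0})"
    by (rule sum.cong) auto
  then show ?thesis
    using sum.remove[OF assms(1,2), of "?f (occ(q0 := Some s))"] sum.remove[OF assms(1,2), of "?f occ"]
      assms(3) by (simp add: occupants_def)
qed

text \<open>Particles are discarded only once all terminal sites are occupied, so the
  occupants of the c terminal sites are the first c particles to enter.\<close>

lemma occupants_foldl_qstep:
  assumes T: "T \<subseteq> {..<n}" "card T = c" and "0 < n"
  shows "\<forall>p\<in>set L. snd p < n \<Longrightarrow>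
    occupants T (fst (foldl (qstep n T) empty_state L)) = mset (take c (map fst L)) \<and>
    card {q\<in>T. fst (foldl (qstep n T) empty_state L) q \<noteq> None} = min c (length L)"
proof (induction L rule: rev_induct)
  case Nil
  show ?case by (simp add: occupants_def)
next
  case (snoc p L)
  obtain s a where p: "p = (s, a)" by fastforce
  have fT: "finite T" using T finite_subset by blast
  define occ where "occ = fst (foldl (qstep n T) empty_state L)"
  have IH: "occupants T occ = mset (take c (map fst L))" "card {q\<in>T. occ q \<noteq> None} = min c (length L)"
    using snoc by (simp_all add: occ_def)
  have step: "fst (foldl (qstep n T) empty_state (L @ [p])) =
     (case stop_index n T occ a of Some k0 \<Rightarrow> occ((a + k0) mod n := Some s) | None \<Rightarrow> occ)"
    unfolding occ_def p by (simp only: foldl_append foldl_Cons foldl_Nil fst_qstep)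
  show ?case
  proof (cases "length L < c")
    case True
    then have "{q\<in>T. occ q \<noteq> None} \<noteq> T" using IH(2) T(2) by auto
    then obtain q where q: "q \<in> T" "occ q = None" by auto
    then have "q \<in> (\<lambda>k. (a + k) mod n) ` {..<n}"
      using T add_mod_image_lessThan[OF \<open>0 < n\<close>] by auto
    then obtain k where "k < n" "(a + k) mod n = q" by auto
    then obtain k0 where S: "stop_index n T occ a = Some k0"
      using q by (cases "stop_index n T occ a") (auto simp: stop_index_eq_None_iff vacant_def)
    define q0 where "q0 = (a + k0) mod n"
    have q0: "q0 \<in> T" "occ q0 = None" using S by (simp_all add: stop_index_eq_Some_iff vacant_def q0_def)
    have "{q\<in>T. (occ(q0 := Some s)) q \<noteq> None} = insert q0 {q\<in>T. occ q \<noteq> None}" using q0 by auto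
    then have "card {q\<in>T. (occ(q0 := Some s)) q \<noteq> None} = Suc (card {q\<in>T. occ q \<noteq> None})"
      using q0 fT by simp
    moreover have new: "fst (foldl (qstep n T) empty_state (L @ [p])) = occ(q0 := Some s)"
      using step S by (simp add: q0_def)
    ultimately show ?thesis
      unfolding new occupants_upd[of T q0 occ s, OF fT q0] using IH True by (simp add: p)
  next
    case False
    have "{q\<in>T. occ q \<noteq> None} = T"
      using IH(2) False T(2) card_subset_eq[OF fT, of "{q\<in>T. occ q \<noteq> None}"] by auto
    then have "stop_index n T occ a = None" by (auto simp: stop_index_eq_None_iff vacant_def)
    then have "fst (foldl (qstep n T) empty_state (L @ [p])) = occ" using step by simp
    with IH False show ?thesis by (simp add: p)
  qed
qed

lemma first_visitor_foldl_range:
  "(\<forall>q v. snd st q = Some v \<longrightarrow> v \<in> A) \<Longrightarrow> \<forall>p\<in>set L. fst p \<in> A \<Longrightarrow>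
   snd (foldl (qstep n T) st L) q = Some v \<Longrightarrow> v \<in> A"
proof (induction L arbitrary: st)
  case (Cons p L)
  then have "\<forall>q v. snd (qstep n T st p) q = Some v \<longrightarrow> v \<in> A"
    by (cases st, cases p) (auto simp: qstep_Pair)
  with Cons show ?case by simp
qed simp

lemma queue_weight_eq_run_weight:
  assumes sizes: "\<forall>p\<in>set (particles n i x). fst p \<in> {1..i}"
  shows "queue_weight n T i x t = run_weight n T (particles n i x) t"
proof -
  define fv where "fv = snd (qrun n T i x)"
  define S where "S = {..<n} - T"
  have range: "fv q = Some v \<Longrightarrow> v \<in> {1..i}" for q v
    using first_visitor_foldl_range[of empty_state "{1..i}" "particles n i x" n T q v] sizes
    by (simp add: fv_def qrun_def)
  have img: "fv ` S \<subseteq> insert None (Some ` {1..i})"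
  proof
    fix y assume "y \<in> fv ` S"
    then show "y \<in> insert None (Some ` {1..i})" using range by (cases y) auto
  qed
  have "run_weight n T (particles n i x) t = (\<Prod>q\<in>S. visitor_weight t (fv q))"
    by (simp add: run_weight_def S_def fv_def qrun_def)
  also have "\<dots> = (\<Prod>y\<in>insert None (Some ` {1..i}). \<Prod>q\<in>{q \<in> S. fv q = y}. visitor_weight t (fv q))"
    by (rule prod.group[symmetric]) (use img in \<open>simp_all add: S_def\<close>)
  also have "\<dots> = (\<Prod>y\<in>Some ` {1..i}. \<Prod>q\<in>{q \<in> S. fv q = y}. visitor_weight t (fv q))"
    by (subst prod.insert) (auto simp: visitor_weight_def)
  also have "\<dots> = (\<Prod>s\<in>{1..i}. \<Prod>q\<in>{q \<in> S. fv q = Some s}. t s)"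
    by (subst prod.reindex) (auto simp: inj_on_def visitor_weight_def intro!: prod.cong)
  also have "\<dots> = (\<Prod>s\<in>{1..i}. t s ^ alpha n T i x s)"
    by (simp add: alpha_def S_def fv_def conj_assoc)
  finally show ?thesis by (simp add: queue_weight_def)
qed

definition type_sizes :: "nat list \<Rightarrow> nat list" where
  "type_sizes m = concat (map (\<lambda>k. replicate (m ! k) (Suc k)) [0..<length m])"

definition particle_sizes :: "word \<Rightarrow> nat \<Rightarrow> nat list" where
  "particle_sizes x n = map the (filter (\<lambda>v. v \<noteq> None) (map x [0..<n]))"

definition has_type :: "nat \<Rightarrow> nat list \<Rightarrow> word \<Rightarrow> bool" where
  "has_type n m x \<longleftrightarrow> (\<forall>q\<ge>n. x q = None) \<and> mset (particle_sizes x n) = mset (type_sizes m)"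

lemma type_sizes_snoc: "type_sizes (m @ [a]) = type_sizes m @ replicate a (Suc (length m))"
proof -
  have eq: "map (\<lambda>k. replicate ((m @ [a]) ! k) (Suc k)) [0..<length m]
      = map (\<lambda>k. replicate (m ! k) (Suc k)) [0..<length m]"
    by (rule map_cong) (auto simp: nth_append)
  have "type_sizes (m @ [a]) = concat (map (\<lambda>k. replicate ((m @ [a]) ! k) (Suc k)) [0..<length m]
      @ [replicate a (Suc (length m))])"
    by (simp add: type_sizes_def)
  then show ?thesis unfolding eq by (simp add: type_sizes_def)
qed

lemma type_sizes_props:
  "set (type_sizes m) \<subseteq> {1..length m} \<and> sorted (type_sizes m) \<and> length (type_sizes m) = sum_list m"
  by (induction m rule: rev_induct) (auto simp: type_sizes_def[of "[]"] type_sizes_snoc sorted_append)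

lemma particle_sizes_Suc:
  "particle_sizes x (Suc n) = particle_sizes x n @ (case x n of None \<Rightarrow> [] | Some s \<Rightarrow> [s])"
  by (simp add: particle_sizes_def split: option.split)

lemma length_particle_sizes: "length (particle_sizes x n) \<le> n"
  by (induction n) (simp_all add: particle_sizes_def split: option.split)

lemma mset_particle_sizes:
  "mset (particle_sizes x n) = (\<Sum>q<n. case x q of None \<Rightarrow> {#} | Some s \<Rightarrow> {#s#})"
  by (induction n) (simp_all add: particle_sizes_Suc particle_sizes_def[of x 0] split: option.split)

lemma mset_map_psize:
  "mset (map (psize i x) [0..<n]) = mset (particle_sizes x n) + replicate_mset (n - length (particle_sizes x n)) i"
proof (induction n)
  case (Suc n)
  then show ?case
    using length_particle_sizes[of x n]
    by (cases "x n") (simp_all add: particle_sizes_Suc psize_def Suc_diff_le)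
qed (simp add: particle_sizes_def)

lemma particles_sites: "\<forall>p\<in>set (particles n i x). snd p < n"
  by (auto simp: particles_def)

lemma length_particles: "length (particles n i x) = n"
  by (simp add: particles_def)

lemma map_fst_particles:
  assumes "has_type n m x" "sum_list m \<le> n"
  shows "map fst (particles n (Suc (length m)) x)
    = type_sizes m @ replicate (n - sum_list m) (Suc (length m))"
proof -
  let ?i = "Suc (length m)"
  have len: "length (particle_sizes x n) = sum_list m"
    using arg_cong[of _ _ size, OF conjunct2[OF assms(1)[unfolded has_type_def]]] type_sizes_props[of m]
    by simp
  have "sort (map (psize ?i x) [0..<n]) = type_sizes m @ replicate (n - sum_list m) ?i"
  proof (rule properties_for_sort)
    show "mset (type_sizes m @ replicate (n - sum_list m) ?i) = mset (map (psize ?i x) [0..<n])"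
      unfolding mset_map_psize len using assms(1) by (simp add: has_type_def)
    show "sorted (type_sizes m @ replicate (n - sum_list m) ?i)"
      using type_sizes_props[of m] by (auto simp: sorted_append)
  qed
  moreover have "map fst (sort_key fst ys) = sort (map fst ys)" for ys :: "(nat \<times> nat) list"
    by (rule properties_for_sort[symmetric]) (simp_all add: mset_map)
  then have "map fst (particles n ?i x) = sort (map (psize ?i x) [0..<n])"
    by (simp add: particles_def comp_def)
  ultimately show ?thesis by simp
qed

lemma particles_sizes_range:
  assumes "has_type n m x" "sum_list m \<le> n"
  shows "\<forall>p\<in>set (particles n (Suc (length m)) x). fst p \<in> {1..Suc (length m)}"
proof
  fix p assume "p \<in> set (particles n (Suc (length m)) x)"
  then have "fst p \<in> set (map fst (particles n (Suc (length m)) x))" by simp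
  then show "fst p \<in> {1..Suc (length m)}"
    unfolding map_fst_particles[OF assms] using type_sizes_props[of m] by auto
qed

lemma take_type_sizes:
  "a \<le> n - sum_list m \<Longrightarrow>
    take (sum_list m + a) (type_sizes m @ replicate (n - sum_list m) i) = type_sizes m @ replicate a i"
  using type_sizes_props[of m] by (simp add: min_def)

lemma queue_out_has_type:
  assumes ty: "has_type n m x" and T: "T \<in> terminal_sets n (sum_list m + a)"
    and c: "sum_list m + a \<le> n" and "0 < n"
  shows "has_type n (m @ [a]) (queue_out n T (Suc (length m)) x)"
proof -
  let ?i = "Suc (length m)"
  define occ where "occ = fst (qrun n T ?i x)"
  have Tn: "T \<subseteq> {..<n}" and cT: "card T = sum_list m + a" using T by (auto simp: terminal_sets_def)
  have "occupants T occ = mset (take (sum_list m + a) (map fst (particles n ?i x)))"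
    using occupants_foldl_qstep[OF Tn cT \<open>0 < n\<close> particles_sites] by (simp add: occ_def qrun_def)
  also have "take (sum_list m + a) (map fst (particles n ?i x)) = type_sizes (m @ [a])"
    using c unfolding map_fst_particles[OF ty le_trans[OF le_add1 c]] type_sizes_snoc
    by (intro take_type_sizes) simp
  finally have occupants: "occupants T occ = mset (type_sizes (m @ [a]))" .
  have out: "queue_out n T ?i x = (\<lambda>q. if q \<in> T then occ q else None)"
    unfolding queue_out_def occ_def by (rule refl)
  have "mset (particle_sizes (queue_out n T ?i x) n)
      = (\<Sum>q<n. if q \<in> T then (case occ q of None \<Rightarrow> {#} | Some s \<Rightarrow> {#s#}) else 0)"
    unfolding out mset_particle_sizes by (rule sum.cong) auto
  also have "\<dots> = occupants T occ"
    unfolding occupants_def sum.inter_restrict[OF finite_lessThan, symmetric]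
    using Tn by (simp add: Int_absorb1)
  finally show ?thesis using occupants Tn by (auto simp: has_type_def out)
qed

lemma hvars_snoc: "hvars (m @ [a]) t = map t (type_sizes m @ replicate (Suc a) (Suc (length m)))"
proof -
  have eq: "map (\<lambda>k. replicate ((m @ [a]) ! k + (if k = length (m @ [a]) - 1 then 1 else 0)) (t (Suc k)))
      [0..<length m] = map (\<lambda>k. map t (replicate (m ! k) (Suc k))) [0..<length m]"
    by (rule map_cong) (auto simp: nth_append)
  have "hvars (m @ [a]) t = concat (map (\<lambda>k. replicate ((m @ [a]) ! k
      + (if k = length (m @ [a]) - 1 then 1 else 0)) (t (Suc k))) [0..<length m]
      @ [replicate (Suc a) (t (Suc (length m)))])"
    by (simp add: hvars_def)
  then show ?thesis unfolding eq by (simp add: type_sizes_def map_concat comp_def)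
qed

lemma sum_queue_weight_last:
  assumes ty: "has_type n m x" and c: "sum_list m + a \<le> n" and "0 < n"
  shows "(\<Sum>T\<in>terminal_sets n (sum_list m + a). queue_weight n T (Suc (length m)) x t)
    = complete_hom (n - (sum_list m + a)) (hvars (m @ [a]) t)"
proof -
  let ?i = "Suc (length m)"
  let ?L = "particles n ?i x"
  have "(\<Sum>T\<in>terminal_sets n (sum_list m + a). queue_weight n T ?i x t)
      = (\<Sum>T\<in>terminal_sets n (sum_list m + a). run_weight n T ?L t)"
    using c by (intro sum.cong refl queue_weight_eq_run_weight particles_sizes_range[OF ty]) simp
  also have "\<dots> = complete_hom (n - (sum_list m + a)) (hvars (m @ [a]) t)"
  proof (cases "sum_list m + a = n")
    case True
    then show ?thesis by (simp add: terminal_sets_self run_weight_def)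
  next
    case False
    have "(\<Sum>T\<in>terminal_sets n (sum_list m + a). run_weight n T ?L t)
      = complete_hom (n - (sum_list m + a)) (map (t \<circ> fst) (take (Suc (sum_list m + a)) ?L))"
      using c False by (intro sum_run_weight) (simp_all add: \<open>0 < n\<close> particles_sites length_particles)
    also have "map (t \<circ> fst) (take (Suc (sum_list m + a)) ?L) = map t (take (sum_list m + Suc a) (map fst ?L))"
      by (simp add: take_map)
    also have "take (sum_list m + Suc a) (map fst ?L) = type_sizes m @ replicate (Suc a) ?i"
      using c False unfolding map_fst_particles[OF ty le_trans[OF le_add1 c]]
      by (intro take_type_sizes) simp
    finally show ?thesis by (simp add: hvars_snoc)
  qed
  finally show ?thesis .
qed

fun mlq_out :: "nat \<Rightarrow> nat \<Rightarrow> word \<Rightarrow> nat set list \<Rightarrow> word" where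
  "mlq_out n i x [] = x"
| "mlq_out n i x (T # Ts) = mlq_out n (Suc i) (queue_out n T i x) Ts"

lemma mlq_out_snoc: "mlq_out n i x (Ts @ [T]) = queue_out n T (i + length Ts) (mlq_out n i x Ts)"
  by (induction Ts arbitrary: i x) simp_all

lemma mlq_weight_snoc:
  "mlq_weight n i x (Ts @ [T]) t
    = mlq_weight n i x Ts t * queue_weight n T (i + length Ts) (mlq_out n i x Ts) t"
  by (induction Ts arbitrary: i x) (simp_all add: mult.assoc)

lemma mlqs_Nil: "mlqs n [] = {[]}"
  by (auto simp: mlqs_def)

lemma mlqs_snocD:
  assumes "Ts \<in> mlqs n (m @ [a])"
  shows "Ts = butlast Ts @ [last Ts] \<and> butlast Ts \<in> mlqs n m \<and> last Ts \<in> terminal_sets n (sum_list m + a)"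
proof -
  have len: "length Ts = Suc (length m)" using assms by (simp add: mlqs_def)
  then have "Ts \<noteq> []" by auto
  moreover have "butlast Ts \<in> mlqs n m"
    unfolding mlqs_def
  proof (intro CollectI conjI allI impI)
    show "length (butlast Ts) = length m" using len by simp
    fix i assume i: "i < length m"
    then have "butlast Ts ! i = Ts ! i" "take (Suc i) (m @ [a]) = take (Suc i) m"
      using len by (simp_all add: nth_butlast)
    then show "butlast Ts ! i \<subseteq> {..<n}" "card (butlast Ts ! i) = sum_list (take (Suc i) m)"
      using assms i by (auto simp: mlqs_def)
  qed
  moreover have "last Ts = Ts ! length m" using len \<open>Ts \<noteq> []\<close> by (simp add: last_conv_nth)
  then have "last Ts \<in> terminal_sets n (sum_list m + a)"
    using assms len by (auto simp: mlqs_def terminal_sets_def)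
  ultimately show ?thesis by simp
qed

lemma mlqs_snocI:
  assumes "Ts \<in> mlqs n m" "T \<in> terminal_sets n (sum_list m + a)"
  shows "Ts @ [T] \<in> mlqs n (m @ [a])"
proof -
  have len: "length Ts = length m" using assms by (simp add: mlqs_def)
  have "(Ts @ [T]) ! i \<subseteq> {..<n} \<and> card ((Ts @ [T]) ! i) = sum_list (take (Suc i) (m @ [a]))"
    if "i < Suc (length m)" for i
  proof (cases "i < length m")
    case True
    then show ?thesis using assms len by (auto simp: mlqs_def nth_append)
  next
    case False
    then have "i = length m" using that by simp
    then show ?thesis using assms len by (auto simp: terminal_sets_def nth_append)
  qed
  then show ?thesis using len by (simp add: mlqs_def)
qed

lemma sum_mlqs_snoc:
  "(\<Sum>Ts\<in>mlqs n (m @ [a]). f Ts) = (\<Sum>Ts\<in>mlqs n m. \<Sum>T\<in>terminal_sets n (sum_list m + a). f (Ts @ [T]))"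
proof -
  have "(\<Sum>Ts\<in>mlqs n (m @ [a]). f Ts) = (\<Sum>p\<in>mlqs n m \<times> terminal_sets n (sum_list m + a). f (fst p @ [snd p]))"
    by (rule sum.reindex_bij_witness[where i = "\<lambda>p. fst p @ [snd p]" and j = "\<lambda>Ts. (butlast Ts, last Ts)"])
      (auto dest: mlqs_snocD intro: mlqs_snocI)
  also have "\<dots> = (\<Sum>Ts\<in>mlqs n m. \<Sum>T\<in>terminal_sets n (sum_list m + a). f (Ts @ [T]))"
    by (simp add: sum.cartesian_product split_def)
  finally show ?thesis .
qed

lemma mlq_out_has_type:
  "Ts \<in> mlqs n m \<Longrightarrow> sum_list m \<le> n \<Longrightarrow> 0 < n \<Longrightarrow> has_type n m (mlq_out n 1 (\<lambda>_. None) Ts)"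
proof (induction m arbitrary: Ts rule: rev_induct)
  case Nil
  then show ?case by (simp add: mlqs_Nil has_type_def particle_sizes_def type_sizes_def)
next
  case (snoc a m)
  note D = mlqs_snocD[OF snoc.prems(1)]
  then have "length (butlast Ts) = length m" by (simp add: mlqs_def)
  with D have "mlq_out n 1 (\<lambda>_. None) Ts
      = queue_out n (last Ts) (Suc (length m)) (mlq_out n 1 (\<lambda>_. None) (butlast Ts))"
    by (metis mlq_out_snoc plus_1_eq_Suc)
  moreover have "has_type n m (mlq_out n 1 (\<lambda>_. None) (butlast Ts))"
    using snoc D by simp
  ultimately show ?case using D snoc.prems(2,3) by (simp add: queue_out_has_type)
qed
theorem corollary7p3:
  fixes n :: nat and m :: "nat list" and t :: "nat \<Rightarrow> 'a::comm_ring_1"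
  assumes "0 < n" and "is_type n m" and "m \<noteq> []"
  shows "Z n m t = Z n (butlast m) t * complete_hom (n - sum_list m) (hvars m t)"
proof -
  obtain m' a where m: "m = m' @ [a]" using assms(3) by (metis append_butlast_last_id)
  have c: "sum_list m' + a \<le> n" using assms(2) by (simp add: is_type_def m)
  let ?h = "complete_hom (n - sum_list m) (hvars m t)"
  have "Z n m t = (\<Sum>Ts\<in>mlqs n m'. \<Sum>T\<in>terminal_sets n (sum_list m' + a).
      mlq_weight n 1 (\<lambda>_. None) (Ts @ [T]) t)"
    unfolding Z_def m by (rule sum_mlqs_snoc)
  also have "\<dots> = (\<Sum>Ts\<in>mlqs n m'. mlq_weight n 1 (\<lambda>_. None) Ts t * ?h)"
  proof (rule sum.cong[OF refl])
    fix Ts assume Ts: "Ts \<in> mlqs n m'"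
    then have len: "length Ts = length m'" by (simp add: mlqs_def)
    have "(\<Sum>T\<in>terminal_sets n (sum_list m' + a). mlq_weight n 1 (\<lambda>_. None) (Ts @ [T]) t)
      = mlq_weight n 1 (\<lambda>_. None) Ts t * (\<Sum>T\<in>terminal_sets n (sum_list m' + a).
          queue_weight n T (Suc (length m')) (mlq_out n 1 (\<lambda>_. None) Ts) t)"
      by (simp add: mlq_weight_snoc sum_distrib_left len)
    also have "\<dots> = mlq_weight n 1 (\<lambda>_. None) Ts t * ?h"
      by (subst sum_queue_weight_last[OF mlq_out_has_type[OF Ts _ assms(1)] c assms(1)])
        (use c in \<open>simp_all add: m\<close>)
    finally show "(\<Sum>T\<in>terminal_sets n (sum_list m' + a). mlq_weight n 1 (\<lambda>_. None) (Ts @ [T]) t)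
      = mlq_weight n 1 (\<lambda>_. None) Ts t * ?h" .
  qed
  also have "\<dots> = Z n m' t * ?h" by (simp add: Z_def sum_distrib_right)
  finally show ?thesis by (simp add: m)
qed

end
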